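(* Let $\mu=\delta\mu'+(1-\delta)\nu$ where $\mu',\nu$ are distributions on $\Sigma\times\Gamma\times\Phi$ and $\delta\in(0,1]$, and let $t:\mathsf{supp}(\mu)\to\mathcal{A}$ ($\mathcal{A}$ a finite Abelian group). Let $\mathcal{G}_\mu$ be the $3$-player $\mathsf{XOR}$ game with question distribution $\mu$ and target $t$, and $\mathcal{G}_{\mu'}$ the game with the same target and question distribution $\mu'$. Then $$\mathsf{val}(\mathcal{G}_\mu^{\otimes n})\le\mathsf{val}(\mathcal{G}_{\mu'}^{\otimes \delta n/2})+2^{-\Omega(\delta n)}.$$
   Context: In a $3$-player $\mathsf{XOR}$ game with distribution $\mu$ and target $t$, the $n$-fold repeated value is $\max_{f,g,h}\Pr_{(x,y,z)\sim\mu^{\otimes n}}[f(x)_i+g(y)_i+h(z)_i=t(x_i,y_i,z_i)\ \forall i\in[n]]$ over $f:\Sigma^n\to\mathcal{A}^n$, $g:\Gamma^n\to\mathcal{A}^n$, $h:\Phi^n\to\mathcal{A}^n$. The $\Omega(\cdot)$ hides an absolute constant. *)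

theory Defs
  imports "HOL-Probability.Probability" "HOL-Algebra.Group"
begin

text \<open>Questions are triples (x,y,z) in Sigma x Gamma x Phi, encoded in nat x nat x nat.
  The answer group A is a finite commutative group (written multiplicatively in
  HOL-Algebra, i.e. its operation plays the role of +), with carrier a set of naturals.
  An n-fold question is a function q :: nat => nat x nat x nat (coordinates i < n),
  drawn from the product distribution mu^(tensor n) = Pi_pmf {..<n} undefined (\<lambda>_. mu).
  A strategy of player 1 maps its own question vector (\<lambda>i. fst (q i)) to an answer
  vector (nat => nat) with entries in the carrier of A at coordinates i < n.\<close>

definition valid_strategy :: "nat monoid \<Rightarrow> nat \<Rightarrow> ((nat \<Rightarrow> nat) \<Rightarrow> (nat \<Rightarrow> nat)) \<Rightarrow> bool" where
  "valid_strategy A n f \<longleftrightarrow> (\<forall>x i. i < n \<longrightarrow> f x i \<in> carrier A)"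

definition xor3_win_prob ::
  "nat monoid \<Rightarrow> (nat \<times> nat \<times> nat \<Rightarrow> nat) \<Rightarrow> (nat \<times> nat \<times> nat) pmf \<Rightarrow> nat
   \<Rightarrow> ((nat \<Rightarrow> nat) \<Rightarrow> (nat \<Rightarrow> nat)) \<Rightarrow> ((nat \<Rightarrow> nat) \<Rightarrow> (nat \<Rightarrow> nat))
   \<Rightarrow> ((nat \<Rightarrow> nat) \<Rightarrow> (nat \<Rightarrow> nat)) \<Rightarrow> real" where
  "xor3_win_prob A t \<mu> n f g h =
     measure_pmf.prob (Pi_pmf {..<n} undefined (\<lambda>_. \<mu>))
       {q. \<forall>i<n. f (\<lambda>j. fst (q j)) i \<otimes>\<^bsub>A\<^esub> g (\<lambda>j. fst (snd (q j))) i
                     \<otimes>\<^bsub>A\<^esub> h (\<lambda>j. snd (snd (q j))) i = t (q i)}"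

definition xor3_val ::
  "nat monoid \<Rightarrow> (nat \<times> nat \<times> nat \<Rightarrow> nat) \<Rightarrow> (nat \<times> nat \<times> nat) pmf \<Rightarrow> nat \<Rightarrow> real" where
  "xor3_val A t \<mu> n = Sup {xor3_win_prob A t \<mu> n f g h | f g h.
      valid_strategy A n f \<and> valid_strategy A n g \<and> valid_strategy A n h}"

end

theory Submission
  imports Defs
begin

(* Write mu as a mixture: toss independent coins B_i ~ Bernoulli(delta) and draw question i from
   mu' if B_i and from nu otherwise. By a Chernoff bound (Markov's inequality applied to
   exp(-#heads)) fewer than delta n / 2 coins come up heads with probability 2^(-Omega(delta n)).
   Otherwise pick a set I of m = floor(delta n / 2) heads and condition on the questions outside I:
   the three strategies then induce strategies for the m-fold game on mu', so the conditional
   winning probability is at most its value. *)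

lemma measure_pmf_prob_bind:
  "measure_pmf.prob (bind_pmf M N) X = measure_pmf.expectation M (\<lambda>x. measure_pmf.prob (N x) X)"
  unfolding measure_pmf_bind
  by (subst measure_pmf.measure_bind[where N="count_space UNIV"])
     (auto simp: measure_pmf_in_subprob_algebra)

lemma integrable_measure_pmf_prob:
  "integrable (measure_pmf M) (\<lambda>x. measure_pmf.prob (N x) (X x))"
  by (rule measure_pmf.integrable_const_bound[where B=1]) auto

lemma pmf_mixture_eq_bind_bernoulli:
  assumes "0 \<le> \<delta>" "\<delta> \<le> 1" "\<And>q. pmf \<mu> q = \<delta> * pmf \<mu>' q + (1 - \<delta>) * pmf \<nu> q"
  shows "\<mu> = bind_pmf (bernoulli_pmf \<delta>) (\<lambda>b. if b then \<mu>' else \<nu>)"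
  by (rule pmf_eqI) (simp add: pmf_bind assms mult.commute)

lemma prob_Pi_pmf_union:
  assumes "finite A" "finite B" "A \<inter> B = {}"
  shows "measure_pmf.prob (Pi_pmf (A \<union> B) d p) X =
    measure_pmf.expectation (Pi_pmf A d p)
      (\<lambda>r. measure_pmf.prob (Pi_pmf B d p) {g. (\<lambda>x. if x \<in> A then r x else g x) \<in> X})"
proof -
  have "Pi_pmf (A \<union> B) d p = bind_pmf (Pi_pmf A d p)
      (\<lambda>r. map_pmf (\<lambda>g x. if x \<in> A then r x else g x) (Pi_pmf B d p))"
    by (simp add: Pi_pmf_union[OF assms] pair_pmf_def map_bind_pmf map_pmf_def bind_assoc_pmf
        bind_return_pmf)
  then show ?thesis
    by (simp add: measure_pmf_prob_bind vimage_def)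
qed

lemma expectation_exp_neg_card_Pi_bernoulli:
  fixes p :: real
  assumes "0 \<le> p" "p \<le> 1"
  shows "measure_pmf.expectation (Pi_pmf {..<n} False (\<lambda>_. bernoulli_pmf p))
           (\<lambda>B. exp (- real (card {i\<in>{..<n}. B i}))) = (1 - p * (1 - exp (-1))) ^ n"
proof -
  have exp_card: "exp (- real (card {i\<in>{..<n}. B i})) = (\<Prod>i<n. if B i then exp (-1) else 1)"
    for B :: "nat \<Rightarrow> bool"
  proof -
    have "(\<Prod>i<n. if B i then exp (-1) else 1) = exp (-1::real) ^ card {i\<in>{..<n}. B i}"
      by (simp add: prod.If_cases Int_def conj_commute)
    then show ?thesis
      by (simp add: exp_of_nat_mult[symmetric])
  qed
  have "measure_pmf.expectation (Pi_pmf {..<n} False (\<lambda>_. bernoulli_pmf p))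
          (\<lambda>B. \<Prod>i<n. if B i then exp (-1) else 1 :: real)
        = (\<Prod>i<n. measure_pmf.expectation (bernoulli_pmf p) (\<lambda>b. if b then exp (-1) else 1))"
    by (rule expectation_prod_Pi_pmf[where f="\<lambda>_ b. if b then exp (-1) else 1"])
       (auto intro: integrable_measure_pmf_finite)
  then show ?thesis
    unfolding exp_card using assms by (simp add: algebra_simps)
qed

lemma prob_Pi_bernoulli_card_less:
  fixes p :: real
  assumes "0 \<le> p" "p \<le> 1" and m: "real m \<le> p * real n / 2"
  shows "measure_pmf.prob (Pi_pmf {..<n} False (\<lambda>_. bernoulli_pmf p))
           {B. card {i\<in>{..<n}. B i} < m} \<le> 2 powr (- p * real n / 10)"
proof -
  let ?P = "Pi_pmf {..<n} False (\<lambda>_. bernoulli_pmf p)"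
  let ?u = "\<lambda>B. exp (- real (card {i\<in>{..<n}. B i}))"
  have integrable: "integrable (measure_pmf ?P) ?u"
    by (rule measure_pmf.integrable_const_bound[where B=1]) auto
  have "measure_pmf.prob ?P {B. card {i\<in>{..<n}. B i} < m}
      \<le> measure_pmf.prob ?P {B. exp (- real m) \<le> ?u B}"
    by (intro measure_pmf.finite_measure_mono) auto
  also have "\<dots> \<le> measure_pmf.expectation ?P ?u / exp (- real m)"
    using integral_Markov_inequality_measure[OF integrable, of UNIV "exp (- real m)"] by simp
  also have "\<dots> = (1 - p * (1 - exp (-1))) ^ n / exp (- real m)"
    unfolding expectation_exp_neg_card_Pi_bernoulli[OF assms(1,2)] ..
  also have "\<dots> \<le> exp (- p * (1 - exp (-1))) ^ n / exp (- (p * real n / 2))"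
  proof (intro frac_le power_mono)
    show "1 - p * (1 - exp (-1)) \<le> exp (- p * (1 - exp (-1)))"
      using exp_ge_add_one_self[of "- p * (1 - exp (-1))"] by simp
    show "0 \<le> 1 - p * (1 - exp (-1))"
      using assms(1,2) mult_le_one[of p "1 - exp (-1)"] by simp
  qed (use m in auto)
  also have "\<dots> = exp (- (1/2 - exp (-1)) * (p * real n))"
    by (simp add: exp_of_nat_mult[symmetric] exp_diff[symmetric] algebra_simps)
  also have "\<dots> \<le> exp (- (ln 2 / 10) * (p * real n))"
  proof -
    have "exp (-1) \<le> (2/5::real)"
      using exp_lower_Taylor_quadratic[of 1] by (simp add: exp_minus field_simps)
    then have "ln 2 / 10 \<le> 1/2 - exp (-1::real)"
      using ln_2_less_1 by simp
    then show ?thesis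
      using assms by (intro exp_mono mult_right_mono) auto
  qed
  also have "\<dots> = 2 powr (- p * real n / 10)"
    by (simp add: powr_def)
  finally show ?thesis .
qed

definition xor3_win_set ::
  "nat monoid \<Rightarrow> (nat \<times> nat \<times> nat \<Rightarrow> nat) \<Rightarrow> nat \<Rightarrow> ((nat \<Rightarrow> nat) \<Rightarrow> (nat \<Rightarrow> nat))
   \<Rightarrow> ((nat \<Rightarrow> nat) \<Rightarrow> (nat \<Rightarrow> nat)) \<Rightarrow> ((nat \<Rightarrow> nat) \<Rightarrow> (nat \<Rightarrow> nat))
   \<Rightarrow> (nat \<Rightarrow> nat \<times> nat \<times> nat) set" where
  "xor3_win_set A t n f g h =
     {q. \<forall>i<n. f (\<lambda>j. fst (q j)) i \<otimes>\<^bsub>A\<^esub> g (\<lambda>j. fst (snd (q j))) i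
                \<otimes>\<^bsub>A\<^esub> h (\<lambda>j. snd (snd (q j))) i = t (q i)}"

lemma xor3_win_prob_eq_prob_win_set:
  "xor3_win_prob A t \<mu> n f g h =
     measure_pmf.prob (Pi_pmf {..<n} undefined (\<lambda>_. \<mu>)) (xor3_win_set A t n f g h)"
  by (simp add: xor3_win_prob_def xor3_win_set_def)

lemma valid_strategy_one: "monoid A \<Longrightarrow> valid_strategy A n (\<lambda>x i. \<one>\<^bsub>A\<^esub>)"
  by (simp add: valid_strategy_def monoid.one_closed)

lemma xor3_win_prob_le_val:
  assumes "valid_strategy A n f" "valid_strategy A n g" "valid_strategy A n h"
  shows "xor3_win_prob A t \<mu> n f g h \<le> xor3_val A t \<mu> n"
  unfolding xor3_val_def
proof (rule cSup_upper)
  show "bdd_above {xor3_win_prob A t \<mu> n f g h | f g h.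
      valid_strategy A n f \<and> valid_strategy A n g \<and> valid_strategy A n h}"
    by (rule bdd_aboveI[where M=1]) (auto simp: xor3_win_prob_def)
qed (use assms in blast)

lemma xor3_val_nonneg:
  assumes "monoid A"
  shows "0 \<le> xor3_val A t \<mu> n"
proof -
  have "0 \<le> xor3_win_prob A t \<mu> n (\<lambda>x i. \<one>\<^bsub>A\<^esub>) (\<lambda>x i. \<one>\<^bsub>A\<^esub>) (\<lambda>x i. \<one>\<^bsub>A\<^esub>)"
    by (simp add: xor3_win_prob_def)
  also have "\<dots> \<le> xor3_val A t \<mu> n"
    by (intro xor3_win_prob_le_val valid_strategy_one assms)
  finally show ?thesis .
qed

lemma xor3_val_least:
  assumes "monoid A"
    and "\<And>f g h. valid_strategy A n f \<Longrightarrow> valid_strategy A n g \<Longrightarrow> valid_strategy A n h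
           \<Longrightarrow> xor3_win_prob A t \<mu> n f g h \<le> X"
  shows "xor3_val A t \<mu> n \<le> X"
  unfolding xor3_val_def
  by (rule cSup_least) (use valid_strategy_one[OF assms(1)] assms(2) in blast)+

lemma prob_xor3_win_fixed_outside_le_val:
  fixes r :: "nat \<Rightarrow> nat \<times> nat \<times> nat" and e \<iota> :: "nat \<Rightarrow> nat"
  assumes "valid_strategy A n f" "valid_strategy A n g" "valid_strategy A n h"
    and e: "\<And>k. k < m \<Longrightarrow> e k < n \<and> e k \<notin> R \<and> \<iota> (e k) = k"
  shows "measure_pmf.prob (Pi_pmf {..<m} undefined (\<lambda>_. \<mu>'))
           {q. (\<lambda>j. if j \<in> R then r j else q (\<iota> j)) \<in> xor3_win_set A t n f g h}
         \<le> xor3_val A t \<mu>' m"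
proof -
  define f' where "f' x k = f (\<lambda>j. if j \<in> R then fst (r j) else x (\<iota> j)) (e k)" for x k
  define g' where "g' y k = g (\<lambda>j. if j \<in> R then fst (snd (r j)) else y (\<iota> j)) (e k)" for y k
  define h' where "h' z k = h (\<lambda>j. if j \<in> R then snd (snd (r j)) else z (\<iota> j)) (e k)" for z k
  have valid: "valid_strategy A m f'" "valid_strategy A m g'" "valid_strategy A m h'"
    using assms(1-3) e unfolding valid_strategy_def f'_def g'_def h'_def by blast+
  have "q \<in> xor3_win_set A t m f' g' h'"
    if win: "(\<lambda>j. if j \<in> R then r j else q (\<iota> j)) \<in> xor3_win_set A t n f g h" for q
    unfolding xor3_win_set_def
  proof (intro CollectI allI impI)
    fix k
    assume "k < m"
    with e have "e k < n" "e k \<notin> R" "\<iota> (e k) = k" by auto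
    with win show "f' (\<lambda>j. fst (q j)) k \<otimes>\<^bsub>A\<^esub> g' (\<lambda>j. fst (snd (q j))) k
                \<otimes>\<^bsub>A\<^esub> h' (\<lambda>j. snd (snd (q j))) k = t (q k)"
      by (force simp: xor3_win_set_def f'_def g'_def h'_def if_distrib)
  qed
  then have "measure_pmf.prob (Pi_pmf {..<m} undefined (\<lambda>_. \<mu>'))
      {q. (\<lambda>j. if j \<in> R then r j else q (\<iota> j)) \<in> xor3_win_set A t n f g h}
      \<le> xor3_win_prob A t \<mu>' m f' g' h'"
    unfolding xor3_win_prob_eq_prob_win_set by (intro measure_pmf.finite_measure_mono) auto
  also have "\<dots> \<le> xor3_val A t \<mu>' m"
    by (rule xor3_win_prob_le_val[OF valid])
  finally show ?thesis .
qed

lemma prob_xor3_win_le_val_of_subset: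
  fixes D :: "nat \<Rightarrow> (nat \<times> nat \<times> nat) pmf"
  assumes valid: "valid_strategy A n f" "valid_strategy A n g" "valid_strategy A n h"
    and I: "I \<subseteq> {..<n}" "card I = m" and D: "\<And>i. i \<in> I \<Longrightarrow> D i = \<mu>'"
  shows "measure_pmf.prob (Pi_pmf {..<n} undefined D) (xor3_win_set A t n f g h)
         \<le> xor3_val A t \<mu>' m"
proof -
  define R where "R = {..<n} - I"
  have "finite I"
    using I(1) finite_subset by blast
  then obtain \<kappa> where \<kappa>: "bij_betw \<kappa> I {..<m}"
    using ex_bij_betw_finite_nat I(2) atLeast0LessThan by metis
  define \<iota> where "\<iota> j = (if j \<in> I then \<kappa> j else m)" for j
  define e where "e = inv_into I \<kappa>"
  have \<iota>: "bij_betw \<iota> I {..<m}"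
    using \<kappa> by (simp add: \<iota>_def cong: bij_betw_cong)
  have e: "e k < n \<and> e k \<notin> R \<and> \<iota> (e k) = k" if "k < m" for k
  proof -
    have "e k \<in> I"
      using bij_betwE[OF bij_betw_inv_into[OF \<kappa>]] that by (simp add: e_def)
    with I(1) \<kappa> that show ?thesis
      by (auto simp: R_def \<iota>_def e_def bij_betw_inv_into_right)
  qed
  have inner: "Pi_pmf I undefined D = map_pmf (\<lambda>q. q \<circ> \<iota>) (Pi_pmf {..<m} undefined (\<lambda>_. \<mu>'))"
  proof -
    have "Pi_pmf I undefined D = Pi_pmf I undefined (\<lambda>_. \<mu>')"
      by (intro Pi_pmf_cong) (auto simp: D)
    also have "\<dots> = map_pmf (\<lambda>q. q \<circ> \<iota>) (Pi_pmf {..<m} undefined (\<lambda>_. \<mu>'))"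
      by (rule Pi_pmf_bij_betw[OF \<open>finite I\<close> \<iota>]) (auto simp: \<iota>_def)
    finally show ?thesis .
  qed
  have "{..<n} = R \<union> I" "R \<inter> I = {}"
    using I(1) by (auto simp: R_def)
  then have "measure_pmf.prob (Pi_pmf {..<n} undefined D) (xor3_win_set A t n f g h) =
      measure_pmf.expectation (Pi_pmf R undefined D) (\<lambda>r. measure_pmf.prob (Pi_pmf I undefined D)
        {q. (\<lambda>j. if j \<in> R then r j else q j) \<in> xor3_win_set A t n f g h})"
    using prob_Pi_pmf_union[of R I] \<open>finite I\<close> by (simp add: R_def)
  also have "\<dots> \<le> xor3_val A t \<mu>' m"
  proof (rule measure_pmf.integral_le_const[OF integrable_measure_pmf_prob], rule AE_I2)
    fix r
    show "measure_pmf.prob (Pi_pmf I undefined D)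
        {q. (\<lambda>j. if j \<in> R then r j else q j) \<in> xor3_win_set A t n f g h} \<le> xor3_val A t \<mu>' m"
      unfolding inner using prob_xor3_win_fixed_outside_le_val[OF valid e, where r=r]
      by (simp add: vimage_def comp_def)
  qed
  finally show ?thesis .
qed

lemma xor3_win_prob_mixture_le:
  fixes \<delta> :: real
  assumes "monoid A"
    and valid: "valid_strategy A n f" "valid_strategy A n g" "valid_strategy A n h"
    and \<delta>: "0 \<le> \<delta>" "\<delta> \<le> 1"
    and mixture: "\<And>q. pmf \<mu> q = \<delta> * pmf \<mu>' q + (1 - \<delta>) * pmf \<nu> q"
  shows "xor3_win_prob A t \<mu> n f g h \<le> xor3_val A t \<mu>' m +
    measure_pmf.prob (Pi_pmf {..<n} False (\<lambda>_. bernoulli_pmf \<delta>)) {B. card {i\<in>{..<n}. B i} < m}"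
proof -
  define K where "K b = (if b then \<mu>' else \<nu>)" for b
  define coins where "coins = Pi_pmf {..<n} False (\<lambda>_. bernoulli_pmf \<delta>)"
  define few where "few = {B. card {i\<in>{..<n}. B i} < m}"
  define V where "V = xor3_val A t \<mu>' m"
  have "Pi_pmf {..<n} undefined (\<lambda>_. \<mu>) =
      bind_pmf coins (\<lambda>B. Pi_pmf {..<n} undefined (\<lambda>i. K (B i)))"
    unfolding pmf_mixture_eq_bind_bernoulli[OF \<delta> mixture] coins_def K_def
    by (rule Pi_pmf_bind) simp
  then have "xor3_win_prob A t \<mu> n f g h = measure_pmf.expectation coins
      (\<lambda>B. measure_pmf.prob (Pi_pmf {..<n} undefined (\<lambda>i. K (B i))) (xor3_win_set A t n f g h))"
    by (simp add: xor3_win_prob_eq_prob_win_set measure_pmf_prob_bind)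
  also have "\<dots> \<le> measure_pmf.expectation coins (\<lambda>B. V + indicator few B)"
  proof (intro integral_mono integrable_measure_pmf_prob)
    show "integrable (measure_pmf coins) (\<lambda>B. V + indicator few B)"
      by (intro Bochner_Integration.integrable_add integrable_real_indicator)
         (auto simp: measure_pmf.emeasure_finite less_top[symmetric])
    fix B :: "nat \<Rightarrow> bool"
    show "measure_pmf.prob (Pi_pmf {..<n} undefined (\<lambda>i. K (B i))) (xor3_win_set A t n f g h)
        \<le> V + indicator few B"
    proof (cases "B \<in> few")
      case True
      then show ?thesis
        using xor3_val_nonneg[OF \<open>monoid A\<close>] by (simp add: V_def add_increasing)
    next
      case False
      then have "m \<le> card {i\<in>{..<n}. B i}"
        by (simp add: few_def)
      then obtain I where "I \<subseteq> {i\<in>{..<n}. B i}" "card I = m"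
        by (rule obtain_subset_with_card_n)
      then have "measure_pmf.prob (Pi_pmf {..<n} undefined (\<lambda>i. K (B i)))
          (xor3_win_set A t n f g h) \<le> V"
        unfolding V_def by (intro prob_xor3_win_le_val_of_subset[OF valid]) (auto simp: K_def)
      with False show ?thesis by simp
    qed
  qed
  also have "\<dots> = V + measure_pmf.prob coins few"
    by (subst Bochner_Integration.integral_add)
       (auto intro!: integrable_real_indicator simp: measure_pmf.emeasure_finite less_top[symmetric])
  finally show ?thesis
    by (simp add: V_def coins_def few_def)
qed

theorem lemma2p5:
  shows "\<exists>c>0. \<forall>(S::nat set) (G::nat set) (P::nat set) (A::nat monoid)
      (\<mu>::(nat \<times> nat \<times> nat) pmf) \<mu>' \<nu> (\<delta>::real) (t::nat \<times> nat \<times> nat \<Rightarrow> nat) (n::nat).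
      finite S \<and> finite G \<and> finite P \<and>
      comm_group A \<and> finite (carrier A) \<and>
      set_pmf \<mu>' \<subseteq> S \<times> G \<times> P \<and> set_pmf \<nu> \<subseteq> S \<times> G \<times> P \<and>
      0 < \<delta> \<and> \<delta> \<le> 1 \<and>
      (\<forall>q. pmf \<mu> q = \<delta> * pmf \<mu>' q + (1 - \<delta>) * pmf \<nu> q) \<and>
      (\<forall>q\<in>set_pmf \<mu>. t q \<in> carrier A)
      \<longrightarrow> xor3_val A t \<mu> n
          \<le> xor3_val A t \<mu>' (nat \<lfloor>\<delta> * real n / 2\<rfloor>) + 2 powr (- c * \<delta> * real n)"
proof (intro exI[where x="1/10"] conjI allI impI)
  fix S G P :: "nat set" and A :: "nat monoid" and \<mu> \<mu>' \<nu> :: "(nat \<times> nat \<times> nat) pmf"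
    and \<delta> :: real and t :: "nat \<times> nat \<times> nat \<Rightarrow> nat" and n :: nat
  assume "finite S \<and> finite G \<and> finite P \<and> comm_group A \<and> finite (carrier A) \<and>
      set_pmf \<mu>' \<subseteq> S \<times> G \<times> P \<and> set_pmf \<nu> \<subseteq> S \<times> G \<times> P \<and> 0 < \<delta> \<and> \<delta> \<le> 1 \<and>
      (\<forall>q. pmf \<mu> q = \<delta> * pmf \<mu>' q + (1 - \<delta>) * pmf \<nu> q) \<and> (\<forall>q\<in>set_pmf \<mu>. t q \<in> carrier A)"
  then have "monoid A" and \<delta>: "0 \<le> \<delta>" "\<delta> \<le> 1"
    and mixture: "\<And>q. pmf \<mu> q = \<delta> * pmf \<mu>' q + (1 - \<delta>) * pmf \<nu> q"
    by (auto simp: comm_group_def group_def)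
  define m where "m = nat \<lfloor>\<delta> * real n / 2\<rfloor>"
  have m: "real m \<le> \<delta> * real n / 2"
    using \<delta> of_int_floor_le[of "\<delta> * real n / 2"] by (simp add: m_def)
  have "xor3_val A t \<mu> n \<le> xor3_val A t \<mu>' m +
      measure_pmf.prob (Pi_pmf {..<n} False (\<lambda>_. bernoulli_pmf \<delta>)) {B. card {i\<in>{..<n}. B i} < m}"
    using \<open>monoid A\<close> by (intro xor3_val_least xor3_win_prob_mixture_le[OF _ _ _ _ \<delta> mixture])
  also have "\<dots> \<le> xor3_val A t \<mu>' m + 2 powr (- (1/10) * \<delta> * real n)"
    using prob_Pi_bernoulli_card_less[OF \<delta> m] by simp
  finally show "xor3_val A t \<mu> n
      \<le> xor3_val A t \<mu>' (nat \<lfloor>\<delta> * real n / 2\<rfloor>) + 2 powr (- (1/10) * \<delta> * real n)"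
    by (simp add: m_def)
qed simp

end
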